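(* Let $V_{\natural}$ be a finite set of boolean and integer variables, $\varphi=\{\varphi_1,\dots,\varphi_n\}$ a set of predicates over integer variables of $V_{\natural}$, and $\alpha^{\tau}$ and $\gamma$ as in the context. For every concrete transition relation $r^{\natural}$ and every set of abstract states $s^{\sharp}$, $$post[r^{\natural}](\gamma(s^{\sharp}))\subseteq\gamma\big(post[\alpha^{\tau}(r^{\natural})](s^{\sharp})\big).$$
   Context: Sets of concrete states are formulas over $V_{\natural}$, concrete transitions are formulas over $V_{\natural}\cup V_{\natural}'$ (primes denote next-state values). For a transition relation $R$ and set of states $A$, $post[R](A)=\{y\mid x\in A,\ (x,y)\in R\}$. $V(\varphi)$ is the set of variables in $\varphi$; $\varphi_i'$ is the primed version of $\varphi_i$. Fresh booleans $b_i,b_i'$ stand for $\varphi_i,\varphi_i'$; abstract variables $V_{\sharp}=(V_{\natural}\cup\{b_i\})\setminus V(\varphi)$. Concretization of abstract states: $\gamma(s^{\sharp})=s^{\sharp}[\bar\varphi/\bar b]$. With $CS=\bigwedge_{i}\big((\bigwedge_{v\in V(\varphi_i)}v'=v)\implies(b_i'\iff b_i)\big)$, transition abstraction is $\alpha^{\tau}(r^{\natural})=\exists V(\varphi).\exists V(\varphi').\big(r^{\natural}\wedge CS\wedge\bigwedge_i(\varphi_i\iff b_i)\wedge\bigwedge_i(\varphi_i'\iff b_i')\big)$, a formula over $V_{\sharp}\cup V_{\sharp}'$. *)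

theory Defs
  imports Main
begin

datatype val = BV bool | IV int
datatype vtype = TBool | TInt

fun has_type :: "val \<Rightarrow> vtype \<Rightarrow> bool" where
  "has_type (BV _) t \<longleftrightarrow> t = TBool"
| "has_type (IV _) t \<longleftrightarrow> t = TInt"

text \<open>Valuations of a variable set X (typed by T): partial maps with domain exactly X.
  A formula over X is identified with the set of valuations of X satisfying it.\<close>
definition states :: "('x \<Rightarrow> vtype) \<Rightarrow> 'x set \<Rightarrow> ('x \<rightharpoonup> val) set" where
  "states T X = {s. dom s = X \<and> (\<forall>x\<in>X. \<forall>u. s x = Some u \<longrightarrow> has_type u (T x))}"

definition post :: "('s \<times> 's) set \<Rightarrow> 's set \<Rightarrow> 's set" where
  "post R A = {y. \<exists>x\<in>A. (x, y) \<in> R}"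

text \<open>Predicates phi 0 .. phi (n-1); Vp i is the variable set V(phi_i);
  V(phi) is their union.\<close>
definition Vphi :: "nat \<Rightarrow> (nat \<Rightarrow> 'v set) \<Rightarrow> 'v set" where
  "Vphi n Vp = (\<Union>i<n. Vp i)"

text \<open>Abstract variables: (V \<union> {b_i}) - V(phi); b_i is Inr i.\<close>
definition absVars :: "'v set \<Rightarrow> nat \<Rightarrow> (nat \<Rightarrow> 'v set) \<Rightarrow> ('v + nat) set" where
  "absVars V n Vp = Inl ` (V - Vphi n Vp) \<union> Inr ` {..<n}"

definition absTy :: "('v \<Rightarrow> vtype) \<Rightarrow> ('v + nat) \<Rightarrow> vtype" where
  "absTy T = case_sum T (\<lambda>_. TBool)"

definition abs_of :: "'v set \<Rightarrow> nat \<Rightarrow> (nat \<Rightarrow> 'v set) \<Rightarrow> (nat \<Rightarrow> ('v \<rightharpoonup> val) \<Rightarrow> bool)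
    \<Rightarrow> ('v \<rightharpoonup> val) \<Rightarrow> ('v + nat) \<rightharpoonup> val" where
  "abs_of V n Vp phi x = (\<lambda>z. case z of
      Inl v \<Rightarrow> (if v \<in> V - Vphi n Vp then x v else None)
    | Inr i \<Rightarrow> (if i < n then Some (BV (phi i x)) else None))"

text \<open>gamma(s#) = s#[phi/b]: a concrete state satisfies it iff s# holds when every b_i
  is replaced by the value of phi_i.\<close>
definition gamma :: "'v set \<Rightarrow> ('v \<Rightarrow> vtype) \<Rightarrow> nat \<Rightarrow> (nat \<Rightarrow> 'v set)
    \<Rightarrow> (nat \<Rightarrow> ('v \<rightharpoonup> val) \<Rightarrow> bool) \<Rightarrow> (('v + nat) \<rightharpoonup> val) set \<Rightarrow> ('v \<rightharpoonup> val) set" where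
  "gamma V T n Vp phi sA = {x \<in> states T V. abs_of V n Vp phi x \<in> sA}"

text \<open>alpha_tau(r) = EX V(phi). EX V(phi'). (r \<and> CS \<and> /\ (phi_i <-> b_i) \<and> /\ (phi_i' <-> b_i')).
  The existentially quantified concrete pair (x,x') agrees with (a,a') on the
  non-eliminated concrete variables V - V(phi).\<close>
definition alpha_tau :: "'v set \<Rightarrow> ('v \<Rightarrow> vtype) \<Rightarrow> nat \<Rightarrow> (nat \<Rightarrow> 'v set)
    \<Rightarrow> (nat \<Rightarrow> ('v \<rightharpoonup> val) \<Rightarrow> bool) \<Rightarrow> (('v \<rightharpoonup> val) \<times> ('v \<rightharpoonup> val)) set
    \<Rightarrow> ((('v + nat) \<rightharpoonup> val) \<times> (('v + nat) \<rightharpoonup> val)) set" where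
  "alpha_tau V T n Vp phi r =
     {(a, a'). a \<in> states (absTy T) (absVars V n Vp) \<and> a' \<in> states (absTy T) (absVars V n Vp) \<and>
        (\<exists>x x'. x \<in> states T V \<and> x' \<in> states T V \<and>
           (\<forall>v\<in>V - Vphi n Vp. x v = a (Inl v) \<and> x' v = a' (Inl v)) \<and>
           (x, x') \<in> r \<and>
           (\<forall>i<n. (\<forall>v\<in>Vp i. x' v = x v) \<longrightarrow> (a' (Inr i) = a (Inr i))) \<and>
           (\<forall>i<n. a (Inr i) = Some (BV (phi i x))) \<and>
           (\<forall>i<n. a' (Inr i) = Some (BV (phi i x'))))}"

end

theory Submission
  imports Defs
begin

text \<open>Every concrete step \<open>(x, y)\<close> of \<open>r\<close> is its own witness for the existential
  quantifiers of \<open>\<alpha>\<^sup>\<tau>(r)\<close>: the pair of abstractions \<open>(abs_of x, abs_of y)\<close> is an abstract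
  transition. The only constraint needing an argument is \<open>CS\<close>, which holds because each
  \<open>\<phi>\<^sub>i\<close> depends only on the variables \<open>V(\<phi>\<^sub>i)\<close>. Hence if \<open>x\<close> concretizes an abstract
  state of \<open>s\<^sup>\<sharp>\<close>, then \<open>y\<close> concretizes its abstract successor.\<close>

lemma abs_of_in_states:
  assumes "x \<in> states T V"
  shows "abs_of V n Vp phi x \<in> states (absTy T) (absVars V n Vp)"
proof -
  have dom_x: "dom x = V" and typed_x: "\<And>v u. v \<in> V \<Longrightarrow> x v = Some u \<Longrightarrow> has_type u (T v)"
    using assms unfolding states_def by auto
  have "z \<in> dom (abs_of V n Vp phi x) \<longleftrightarrow> z \<in> absVars V n Vp" for z
    using dom_x unfolding abs_of_def absVars_def
    by (cases z) (auto simp: dom_def)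
  moreover have "has_type u (absTy T z)"
    if "abs_of V n Vp phi x z = Some u" for z u
    using that typed_x unfolding abs_of_def absTy_def
    by (cases z) (auto split: if_splits)
  ultimately show ?thesis
    unfolding states_def by blast
qed

lemma abs_of_step_in_alpha_tau:
  assumes local: "\<And>i x y. i < n \<Longrightarrow> x \<in> states T V \<Longrightarrow> y \<in> states T V \<Longrightarrow>
                    (\<forall>v\<in>Vp i. x v = y v) \<Longrightarrow> phi i x = phi i y"
    and x: "x \<in> states T V" and y: "y \<in> states T V" and step: "(x, y) \<in> r"
  shows "(abs_of V n Vp phi x, abs_of V n Vp phi y) \<in> alpha_tau V T n Vp phi r"
proof -
  have CS: "abs_of V n Vp phi y (Inr i) = abs_of V n Vp phi x (Inr i)"
    if "i < n" and "\<forall>v\<in>Vp i. y v = x v" for i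
    using local[OF \<open>i < n\<close> x y] that unfolding abs_of_def by simp
  have unabstracted: "\<forall>v\<in>V - Vphi n Vp.
      x v = abs_of V n Vp phi x (Inl v) \<and> y v = abs_of V n Vp phi y (Inl v)"
    and predicates: "\<forall>i<n. abs_of V n Vp phi x (Inr i) = Some (BV (phi i x))"
      "\<forall>i<n. abs_of V n Vp phi y (Inr i) = Some (BV (phi i y))"
    unfolding abs_of_def by simp_all
  show ?thesis
    unfolding alpha_tau_def mem_Collect_eq case_prod_conv
    using abs_of_in_states[OF x] abs_of_in_states[OF y] x y step CS unabstracted predicates
    by (intro conjI exI[of _ x] exI[of _ y]) simp_all
qed

theorem lemma5:
  fixes V :: "'v set" and T :: "'v \<Rightarrow> vtype" and n :: nat
    and Vp :: "nat \<Rightarrow> 'v set" and phi :: "nat \<Rightarrow> ('v \<rightharpoonup> val) \<Rightarrow> bool"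
    and r :: "(('v \<rightharpoonup> val) \<times> ('v \<rightharpoonup> val)) set"
    and sA :: "(('v + nat) \<rightharpoonup> val) set"
  assumes "finite V"
    and "\<And>i. i < n \<Longrightarrow> Vp i \<subseteq> {v \<in> V. T v = TInt}"
    and "\<And>i x y. i < n \<Longrightarrow> x \<in> states T V \<Longrightarrow> y \<in> states T V \<Longrightarrow>
           (\<forall>v\<in>Vp i. x v = y v) \<Longrightarrow> phi i x = phi i y"
    and "r \<subseteq> states T V \<times> states T V"
    and "sA \<subseteq> states (absTy T) (absVars V n Vp)"
  shows "post r (gamma V T n Vp phi sA)
           \<subseteq> gamma V T n Vp phi (post (alpha_tau V T n Vp phi r) sA)"
proof
  fix y assume "y \<in> post r (gamma V T n Vp phi sA)"
  then obtain x where x: "x \<in> gamma V T n Vp phi sA" and step: "(x, y) \<in> r"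
    unfolding post_def by blast
  have x_state: "x \<in> states T V" and y: "y \<in> states T V"
    using step assms(4) by auto
  have "(abs_of V n Vp phi x, abs_of V n Vp phi y) \<in> alpha_tau V T n Vp phi r"
    by (rule abs_of_step_in_alpha_tau[where phi = phi, OF assms(3) x_state y step])
  moreover have "abs_of V n Vp phi x \<in> sA"
    using x unfolding gamma_def by simp
  ultimately have "abs_of V n Vp phi y \<in> post (alpha_tau V T n Vp phi r) sA"
    unfolding post_def by (intro CollectI bexI)
  with y show "y \<in> gamma V T n Vp phi (post (alpha_tau V T n Vp phi r) sA)"
    unfolding gamma_def by simp
qed

end
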